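(* Let $R=K[X_1,\dots,X_d]$ be a polynomial ring over a field $K$, $I$ a monomial ideal of $R$ and $J$ any ideal of $R$. Then $I:_RJ^\infty$ is a monomial ideal of $R$.
   Context: $I:_RJ^\infty=\bigcup_k(I:_RJ^k)$. *)

theory Defs
  imports Main "HOL-Library.Poly_Mapping"
begin

definition is_ideal :: "'a::comm_ring_1 set \<Rightarrow> bool" where
  "is_ideal I \<longleftrightarrow> 0 \<in> I \<and> (\<forall>a\<in>I. \<forall>b\<in>I. a + b \<in> I) \<and> (\<forall>r. \<forall>a\<in>I. r * a \<in> I)"

definition ideal_gen :: "'a::comm_ring_1 set \<Rightarrow> 'a set" where
  "ideal_gen S = \<Inter>{I. is_ideal I \<and> S \<subseteq> I}"

definition ideal_prod :: "'a::comm_ring_1 set \<Rightarrow> 'a set \<Rightarrow> 'a set" where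
  "ideal_prod A B = ideal_gen {a * b |a b. a \<in> A \<and> b \<in> B}"

primrec ideal_pow :: "'a::comm_ring_1 set \<Rightarrow> nat \<Rightarrow> 'a set" where
  "ideal_pow J 0 = UNIV"
| "ideal_pow J (Suc k) = ideal_prod (ideal_pow J k) J"

definition ideal_colon :: "'a::comm_ring_1 set \<Rightarrow> 'a set \<Rightarrow> 'a set" where
  "ideal_colon I J = {f. \<forall>g\<in>J. f * g \<in> I}"

definition ideal_saturation :: "'a::comm_ring_1 set \<Rightarrow> 'a set \<Rightarrow> 'a set" where
  "ideal_saturation I J = (\<Union>k. ideal_colon I (ideal_pow J k))"

text \<open>Polynomial ring K[X_v : v in 'v] as finitely supported maps from
  exponent vectors to coefficients; with 'v finite of cardinality d this is K[X_1..X_d].\<close>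
type_synonym ('v, 'a) mpoly = "('v \<Rightarrow>\<^sub>0 nat) \<Rightarrow>\<^sub>0 'a"

definition monomial_poly :: "('v \<Rightarrow>\<^sub>0 nat) \<Rightarrow> ('v, 'a::comm_ring_1) mpoly" where
  "monomial_poly m = Poly_Mapping.single m 1"

definition monomial_ideal :: "('v, 'a::comm_ring_1) mpoly set \<Rightarrow> bool" where
  "monomial_ideal I \<longleftrightarrow> (\<exists>M. I = ideal_gen (monomial_poly ` M))"

end

theory Submission
  imports Defs "HOL-Library.Countable"
begin

(* Let I be generated by the monomials x^mu, mu in M. As the saturation is an ideal, it suffices
   to show that every monomial x^c occurring in some f in I : J^k lies in I : J^K for some K.
   For g in J and a term x^b of g we have f g^k in I; comparing terms of lowest total degree in
   the variables outside supp b (x^b itself has degree 0) shows that x^c becomes a multiple of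
   some x^mu once the variables of supp b are set to 1. There are only finitely many supports,
   so the exponents of these mu are bounded by some N. Every term of an element of J^K is a
   multiple of a product of K terms of elements of J; for K > 2^d N some support s occurs more
   than N times among them, and then x^c times that term is a multiple of the x^mu chosen for s.
   In particular J need not be finitely generated. *)

abbreviation lookup where "lookup \<equiv> Poly_Mapping.lookup"
abbreviation keys where "keys \<equiv> Poly_Mapping.keys"

lemma ideal_zero: "is_ideal A \<Longrightarrow> 0 \<in> A"
  unfolding is_ideal_def by blast

lemma ideal_add: "is_ideal A \<Longrightarrow> a \<in> A \<Longrightarrow> b \<in> A \<Longrightarrow> a + b \<in> A"
  unfolding is_ideal_def by blast

lemma ideal_mult: "is_ideal A \<Longrightarrow> a \<in> A \<Longrightarrow> r * a \<in> A"
  unfolding is_ideal_def by blast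

lemma ideal_sum: "is_ideal A \<Longrightarrow> (\<And>x. x \<in> X \<Longrightarrow> h x \<in> A) \<Longrightarrow> sum h X \<in> A"
  by (induction X rule: infinite_finite_induct) (auto intro: ideal_zero ideal_add)

lemma is_ideal_ideal_gen: "is_ideal (ideal_gen S)"
  unfolding ideal_gen_def is_ideal_def by auto

lemma ideal_gen_superset: "S \<subseteq> ideal_gen S"
  unfolding ideal_gen_def by auto

lemma ideal_gen_minimal: "is_ideal A \<Longrightarrow> S \<subseteq> A \<Longrightarrow> ideal_gen S \<subseteq> A"
  unfolding ideal_gen_def by auto

lemma is_ideal_ideal_pow: "is_ideal (ideal_pow J k)"
  by (cases k) (simp_all add: ideal_prod_def is_ideal_ideal_gen, simp add: is_ideal_def)

lemma ideal_prod_subset_left: "is_ideal A \<Longrightarrow> ideal_prod A B \<subseteq> A"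
  unfolding ideal_prod_def
  by (rule ideal_gen_minimal) (auto simp: mult.commute[of _ b for b] dest: ideal_mult)

lemma ideal_pow_antimono: "k \<le> l \<Longrightarrow> ideal_pow J l \<subseteq> ideal_pow J k"
proof (induction l rule: dec_induct)
  case (step l)
  then show ?case
    using ideal_prod_subset_left[OF is_ideal_ideal_pow, of J l J] by auto
qed simp

lemma power_mem_ideal_pow: "g \<in> J \<Longrightarrow> g ^ k \<in> ideal_pow J k"
proof (induction k)
  case (Suc k)
  then have "g ^ k * g \<in> ideal_prod (ideal_pow J k) J"
    unfolding ideal_prod_def by (blast intro: subsetD[OF ideal_gen_superset])
  then show ?case by (simp only: ideal_pow.simps power_Suc2)
qed simp

lemma is_ideal_ideal_colon: "is_ideal I \<Longrightarrow> is_ideal (ideal_colon I A)"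
  unfolding is_ideal_def ideal_colon_def by (auto simp: distrib_right mult.assoc)

lemma ideal_colon_pow_mono:
  "k \<le> l \<Longrightarrow> ideal_colon I (ideal_pow J k) \<subseteq> ideal_colon I (ideal_pow J l)"
  unfolding ideal_colon_def using ideal_pow_antimono[of k l J] by auto

lemma is_ideal_ideal_saturation:
  assumes "is_ideal I"
  shows "is_ideal (ideal_saturation I J)"
  unfolding is_ideal_def
proof (intro conjI ballI allI)
  have colon: "is_ideal (ideal_colon I (ideal_pow J k))" for k
    using assms by (rule is_ideal_ideal_colon)
  show "0 \<in> ideal_saturation I J"
    unfolding ideal_saturation_def using ideal_zero[OF colon] by blast
  show "r * a \<in> ideal_saturation I J" if "a \<in> ideal_saturation I J" for r a
    using that ideal_mult[OF colon] unfolding ideal_saturation_def by blast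
  fix a b assume "a \<in> ideal_saturation I J" "b \<in> ideal_saturation I J"
  then obtain k l where "a \<in> ideal_colon I (ideal_pow J k)" "b \<in> ideal_colon I (ideal_pow J l)"
    unfolding ideal_saturation_def by blast
  then have "a \<in> ideal_colon I (ideal_pow J (max k l))" "b \<in> ideal_colon I (ideal_pow J (max k l))"
    using ideal_colon_pow_mono[of k "max k l" I J] ideal_colon_pow_mono[of l "max k l" I J] by auto
  then show "a + b \<in> ideal_saturation I J"
    unfolding ideal_saturation_def using ideal_add[OF colon] by blast
qed

section \<open>Monomial ideals\<close>

definition pm_le :: "('v \<Rightarrow>\<^sub>0 nat) \<Rightarrow> ('v \<Rightarrow>\<^sub>0 nat) \<Rightarrow> bool" where
  "pm_le a b \<longleftrightarrow> (\<forall>v. lookup a v \<le> lookup b v)"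

lemma pm_le_add_right: "pm_le a b \<Longrightarrow> pm_le a (b + c)"
  unfolding pm_le_def lookup_add by (meson trans_le_add1)

lemma poly_mapping_sum_single: "f = (\<Sum>c\<in>keys f. Poly_Mapping.single c (lookup f c))"
proof (rule poly_mapping_eqI)
  fix k
  show "lookup f k = lookup (\<Sum>c\<in>keys f. Poly_Mapping.single c (lookup f c)) k"
    unfolding lookup_sum lookup_single
    by (cases "k \<in> keys f") (auto simp: when_def in_keys_iff)
qed

lemma ideal_mem_if_monomials_mem:
  fixes f :: "('v, 'a::comm_ring_1) mpoly"
  assumes "is_ideal A" and "\<And>c. c \<in> keys f \<Longrightarrow> monomial_poly c \<in> A"
  shows "f \<in> A"
proof -
  have "Poly_Mapping.single 0 (lookup f c) * monomial_poly c \<in> A" if "c \<in> keys f" for c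
    using assms that by (blast intro: ideal_mult)
  then have "(\<Sum>c\<in>keys f. Poly_Mapping.single c (lookup f c)) \<in> A"
    using assms(1) by (auto simp: monomial_poly_def mult_single intro: ideal_sum)
  then show ?thesis
    by (subst poly_mapping_sum_single)
qed

lemma is_ideal_keys_subset:
  assumes "\<And>a e. a \<in> U \<Longrightarrow> a + e \<in> U"
  shows "is_ideal {p :: ('v, 'a::comm_ring_1) mpoly. keys p \<subseteq> U}"
  unfolding is_ideal_def
proof (intro conjI ballI allI)
  show "r * p \<in> {p. keys p \<subseteq> U}" if "p \<in> {p. keys p \<subseteq> U}" for r p :: "('v, 'a) mpoly"
  proof (rule CollectI, rule subsetI)
    fix x assume "x \<in> keys (r * p)"
    then obtain a b where "x = a + b" "b \<in> keys p"
      using keys_mult[of r p] by blast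
    then show "x \<in> U"
      using that assms[of b a] by (auto simp: add.commute)
  qed
next
  show "a + b \<in> {p. keys p \<subseteq> U}" if "a \<in> {p. keys p \<subseteq> U}" "b \<in> {p. keys p \<subseteq> U}"
    for a b :: "('v, 'a) mpoly"
    using that keys_add[of a b] by auto
qed simp

lemma mem_monomial_ideal_iff:
  fixes f :: "('v, 'a::comm_ring_1) mpoly"
  shows "f \<in> ideal_gen (monomial_poly ` M) \<longleftrightarrow> (\<forall>c\<in>keys f. \<exists>\<mu>\<in>M. pm_le \<mu> c)"
proof
  let ?U = "{c. \<exists>\<mu>\<in>M. pm_le \<mu> c}"
  have "ideal_gen (monomial_poly ` M) \<subseteq> {p :: ('v, 'a) mpoly. keys p \<subseteq> ?U}"
  proof (rule ideal_gen_minimal)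
    show "is_ideal {p :: ('v, 'a) mpoly. keys p \<subseteq> ?U}"
      by (rule is_ideal_keys_subset) (auto intro: pm_le_add_right)
  qed (auto simp: monomial_poly_def pm_le_def)
  then show "f \<in> ideal_gen (monomial_poly ` M) \<Longrightarrow> \<forall>c\<in>keys f. \<exists>\<mu>\<in>M. pm_le \<mu> c"
    by blast
next
  assume divisible: "\<forall>c\<in>keys f. \<exists>\<mu>\<in>M. pm_le \<mu> c"
  show "f \<in> ideal_gen (monomial_poly ` M)"
  proof (rule ideal_mem_if_monomials_mem[OF is_ideal_ideal_gen])
    fix c assume "c \<in> keys f"
    then obtain \<mu> where "\<mu> \<in> M" "pm_le \<mu> c"
      using divisible by blast
    then have "(c - \<mu>) + \<mu> = c"
      by (intro poly_mapping_eqI) (simp add: pm_le_def lookup_add lookup_minus)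
    then have "monomial_poly c = (monomial_poly (c - \<mu>) :: ('v, 'a) mpoly) * monomial_poly \<mu>"
      by (simp add: monomial_poly_def mult_single)
    moreover have "(monomial_poly \<mu> :: ('v, 'a) mpoly) \<in> ideal_gen (monomial_poly ` M)"
      using \<open>\<mu> \<in> M\<close> ideal_gen_superset by blast
    ultimately show "(monomial_poly c :: ('v, 'a) mpoly) \<in> ideal_gen (monomial_poly ` M)"
      using ideal_mult[OF is_ideal_ideal_gen] by metis
  qed
qed

lemma monomial_idealI:
  fixes S :: "('v, 'a::comm_ring_1) mpoly set"
  assumes "is_ideal S" and "\<And>f c. f \<in> S \<Longrightarrow> c \<in> keys f \<Longrightarrow> monomial_poly c \<in> S"
  shows "monomial_ideal S"
proof -
  let ?M = "{c. monomial_poly c \<in> S}"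
  have "ideal_gen (monomial_poly ` ?M) \<subseteq> S"
    using assms(1) by (rule ideal_gen_minimal) blast
  moreover have "f \<in> ideal_gen (monomial_poly ` ?M)" if "f \<in> S" for f
  proof (rule ideal_mem_if_monomials_mem[OF is_ideal_ideal_gen])
    fix c assume "c \<in> keys f"
    then have "c \<in> ?M"
      using assms(2) that by blast
    then show "monomial_poly c \<in> ideal_gen (monomial_poly ` ?M :: ('v, 'a) mpoly set)"
      by (intro subsetD[OF ideal_gen_superset] imageI)
  qed
  ultimately have "S = ideal_gen (monomial_poly ` ?M)"
    by blast
  then show ?thesis
    unfolding monomial_ideal_def by (rule exI)
qed

section \<open>Lowest-degree terms of products\<close>

definition pm_filter :: "('b \<Rightarrow> bool) \<Rightarrow> ('b \<Rightarrow>\<^sub>0 'a::zero) \<Rightarrow> ('b \<Rightarrow>\<^sub>0 'a)" where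
  "pm_filter P p = Abs_poly_mapping (\<lambda>x. if P x then lookup p x else 0)"

lemma lookup_pm_filter: "lookup (pm_filter P p) x = (if P x then lookup p x else 0)"
proof -
  have "{x. (if P x then lookup p x else 0) \<noteq> 0} = {x \<in> keys p. P x}"
    by (auto simp: in_keys_iff)
  then have "finite {x. (if P x then lookup p x else 0) \<noteq> 0}"
    by simp
  then show ?thesis
    unfolding pm_filter_def by simp
qed

lemma keys_pm_filter: "keys (pm_filter P p) = {x \<in> keys p. P x}"
  by (rule set_eqI) (simp add: in_keys_iff lookup_pm_filter)

lemma pm_filter_add_compl: "pm_filter P p + pm_filter (\<lambda>x. \<not> P x) p = (p :: 'b \<Rightarrow>\<^sub>0 'a::monoid_add)"
  by (rule poly_mapping_eqI) (simp add: lookup_add lookup_pm_filter)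

lemma lookup_mult_unique_sum:
  fixes f g :: "'m::cancel_comm_monoid_add \<Rightarrow>\<^sub>0 'a::semiring_0"
  assumes "\<And>a' b'. a' \<in> keys f \<Longrightarrow> b' \<in> keys g \<Longrightarrow> a' + b' = a + b \<Longrightarrow> a' = a"
  shows "lookup (f * g) (a + b) = lookup f a * lookup g b"
proof -
  have "lookup f l * (\<Sum>q. lookup g q when a + b = l + q) = (lookup f a * lookup g b when l = a)" for l
  proof (cases "l = a")
    case False
    have "(lookup g q when a + b = l + q) = 0" if "lookup f l \<noteq> 0" for q
      using assms[of l q] False that by (cases "lookup g q = 0") (auto simp: in_keys_iff when_def dest: sym)
    with False show ?thesis
      by (cases "lookup f l = 0") simp_all
  qed simp
  then show ?thesis
    by (simp add: lookup_mult)
qed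

(* The variables carry no order; reindexing along to_nat makes the lexicographic order on
   nat \<Rightarrow>\<^sub>0 nat, a total order compatible with addition, available for breaking ties. *)
definition reindex_nat :: "('v::finite \<Rightarrow>\<^sub>0 nat) \<Rightarrow> (nat \<Rightarrow>\<^sub>0 nat)" where
  "reindex_nat c = (\<Sum>v\<in>UNIV. Poly_Mapping.single (to_nat v) (lookup c v))"

lemma lookup_reindex_nat: "lookup (reindex_nat c) (to_nat v) = lookup c v"
  unfolding reindex_nat_def lookup_sum lookup_single by (simp add: when_def)

lemma reindex_nat_add: "reindex_nat (a + b) = reindex_nat a + reindex_nat b"
  unfolding reindex_nat_def by (simp add: lookup_add single_add sum.distrib)

lemma inj_reindex_nat: "inj reindex_nat"
  by (rule injI, rule poly_mapping_eqI) (metis lookup_reindex_nat)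

lemma ex_min_deg_max_weight:
  fixes deg :: "'a \<Rightarrow> 'b::linorder" and w :: "'a \<Rightarrow> 'c::linorder"
  assumes "finite A" and "A \<noteq> {}"
  shows "\<exists>a\<in>A. (\<forall>a'\<in>A. deg a \<le> deg a') \<and> (\<forall>a'\<in>A. deg a' = deg a \<longrightarrow> w a' \<le> w a)"
proof -
  define A0 where "A0 = {a \<in> A. deg a = Min (deg ` A)}"
  have "Min (deg ` A) \<in> deg ` A"
    using assms by (intro Min_in) auto
  then have "finite A0" "A0 \<noteq> {}"
    using assms(1) by (auto simp: A0_def)
  then have "Max (w ` A0) \<in> w ` A0"
    by (intro Max_in) auto
  then obtain a where "a \<in> A0" "w a = Max (w ` A0)"
    by auto
  then show ?thesis
    using assms \<open>finite A0\<close> by (intro bexI[of _ a]) (auto simp: A0_def)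
qed

lemma key_mult_lowest_degree:
  fixes f g :: "('v::finite, 'a::semiring_no_zero_divisors) mpoly"
    and deg :: "('v \<Rightarrow>\<^sub>0 nat) \<Rightarrow> nat"
  assumes deg_add: "\<And>a b. deg (a + b) = deg a + deg b" and "f \<noteq> 0" and "g \<noteq> 0"
  shows "\<exists>a\<in>keys f. \<exists>b\<in>keys g. a + b \<in> keys (f * g)
           \<and> (\<forall>a'\<in>keys f. deg a \<le> deg a') \<and> (\<forall>b'\<in>keys g. deg b \<le> deg b')"
proof -
  obtain a where a: "a \<in> keys f" "\<forall>a'\<in>keys f. deg a \<le> deg a'"
      "\<forall>a'\<in>keys f. deg a' = deg a \<longrightarrow> reindex_nat a' \<le> reindex_nat a"
    using ex_min_deg_max_weight[of "keys f" deg reindex_nat] assms(2) by auto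
  obtain b where b: "b \<in> keys g" "\<forall>b'\<in>keys g. deg b \<le> deg b'"
      "\<forall>b'\<in>keys g. deg b' = deg b \<longrightarrow> reindex_nat b' \<le> reindex_nat b"
    using ex_min_deg_max_weight[of "keys g" deg reindex_nat] assms(3) by auto
  have "a' = a" if "a' \<in> keys f" "b' \<in> keys g" "a' + b' = a + b" for a' b'
  proof -
    have "deg a' = deg a" "deg b' = deg b"
      using deg_add[of a' b'] deg_add[of a b] a(2) b(2) that by force+
    then have "reindex_nat a' \<le> reindex_nat a" "reindex_nat b' \<le> reindex_nat b"
      using a(3) b(3) that by auto
    moreover have "reindex_nat a' + reindex_nat b' = reindex_nat a + reindex_nat b"
      using that(3) by (metis reindex_nat_add)
    ultimately have "reindex_nat a' = reindex_nat a"
      by (metis add_less_le_mono order_le_less order_less_irrefl)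
    then show ?thesis
      by (rule injD[OF inj_reindex_nat])
  qed
  then have "lookup (f * g) (a + b) = lookup f a * lookup g b"
    by (rule lookup_mult_unique_sum)
  then have "a + b \<in> keys (f * g)"
    using a(1) b(1) by (simp add: in_keys_iff)
  with a b show ?thesis
    by blast
qed

lemma keys_subset_if_keys_mult_subset:
  fixes f g :: "('v::finite, 'a::idom) mpoly" and deg :: "('v \<Rightarrow>\<^sub>0 nat) \<Rightarrow> nat"
  assumes deg_add: "\<And>a b. deg (a + b) = deg a + deg b"
    and up: "\<And>a e. a \<in> U \<Longrightarrow> a + e \<in> U"
    and down: "\<And>a y. a + y \<in> U \<Longrightarrow> deg y = 0 \<Longrightarrow> a \<in> U"
    and fg: "keys (f * g) \<subseteq> U" and b: "b \<in> keys g" "deg b = 0"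
  shows "keys f \<subseteq> U"
proof -
  define f_in where "f_in = pm_filter (\<lambda>a. a \<in> U) f"
  define f_out where "f_out = pm_filter (\<lambda>a. a \<notin> U) f"
  have f: "f = f_in + f_out"
    unfolding f_in_def f_out_def by (rule pm_filter_add_compl[symmetric])
  have "keys (f_in * g) \<subseteq> U"
    using keys_mult[of f_in g] up by (force simp: f_in_def keys_pm_filter)
  moreover have "f_out * g = f * g - f_in * g"
    by (simp add: f algebra_simps)
  ultimately have out: "keys (f_out * g) \<subseteq> U"
    using keys_diff[of "f * g" "f_in * g"] fg by auto
  have "f_out = 0"
  proof (rule ccontr)
    assume "f_out \<noteq> 0"
    moreover have "g \<noteq> 0"
      using b by auto
    ultimately obtain a y where "a \<in> keys f_out" "a + y \<in> keys (f_out * g)" "deg y \<le> deg b"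
      using key_mult_lowest_degree[of deg f_out g, OF deg_add] b(1) by blast
    then have "a \<in> U"
      using out b(2) down[of a y] by auto
    with \<open>a \<in> keys f_out\<close> show False
      by (simp add: f_out_def keys_pm_filter)
  qed
  then have "keys f = keys f_in"
    using f by simp
  then show ?thesis
    by (auto simp: f_in_def keys_pm_filter)
qed

section \<open>Saturation of monomial ideals\<close>

lemma ex_generator_le_outside_keys:
  fixes f g :: "('v::finite, 'a::idom) mpoly"
  assumes "f * g ^ k \<in> ideal_gen (monomial_poly ` M)" and "b \<in> keys g" and "c \<in> keys f"
  shows "\<exists>\<mu>\<in>M. \<forall>v. v \<notin> keys b \<longrightarrow> lookup \<mu> v \<le> lookup c v"
proof -
  \<comment> \<open>the exponents of monomials lying in the ideal once the variables of x^b are set to 1\<close>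
  define U where "U = {d. \<exists>\<mu>\<in>M. \<forall>v. v \<notin> keys b \<longrightarrow> lookup \<mu> v \<le> lookup d v}"
  define deg where "deg d = (\<Sum>v\<in>-keys b. lookup d v)" for d :: "'v \<Rightarrow>\<^sub>0 nat"
  have deg_add: "deg (a + e) = deg a + deg e" for a e
    by (simp add: deg_def lookup_add sum.distrib)
  have up: "a + e \<in> U" if "a \<in> U" for a e
    using that by (fastforce simp: U_def lookup_add intro: trans_le_add1)
  have down: "a \<in> U" if "a + y \<in> U" and "deg y = 0" for a y
  proof -
    have "lookup y v = 0" if "v \<notin> keys b" for v
      using \<open>deg y = 0\<close> that by (simp add: deg_def)
    with \<open>a + y \<in> U\<close> show ?thesis
      by (simp add: U_def lookup_add)
  qed
  have "deg b = 0"
    by (simp add: deg_def in_keys_iff)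
  have "keys h \<subseteq> U" if "keys (h * g ^ n) \<subseteq> U" for h n
    using that
  proof (induction n arbitrary: h)
    case (Suc n)
    then have "keys (h * g) \<subseteq> U"
      by (simp add: mult.assoc)
    then show ?case
      using keys_subset_if_keys_mult_subset[where deg = deg and U = U and g = g and b = b]
        deg_add up down assms(2) \<open>deg b = 0\<close> by blast
  qed simp
  moreover have "keys (f * g ^ k) \<subseteq> U"
  proof
    fix d assume "d \<in> keys (f * g ^ k)"
    then obtain \<mu> where "\<mu> \<in> M" "pm_le \<mu> d"
      using assms(1) mem_monomial_ideal_iff by blast
    then show "d \<in> U"
      by (auto simp: U_def pm_le_def)
  qed
  ultimately show ?thesis
    using assms(3) by (auto simp: U_def)
qed

lemma keys_ideal_pow:
  fixes h :: "('v, 'a::comm_ring_1) mpoly"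
  assumes "h \<in> ideal_pow J k" and "d \<in> keys h"
  shows "\<exists>\<phi>. (\<forall>i<k. \<exists>g\<in>J. \<phi> i \<in> keys g) \<and> pm_le (\<Sum>i<k. \<phi> i) d"
  using assms
proof (induction k arbitrary: h d)
  case 0
  then show ?case
    by (simp add: pm_le_def)
next
  case (Suc k)
  define U where "U = {d. \<exists>\<phi>. (\<forall>i<Suc k. \<exists>g\<in>J. \<phi> i \<in> keys g) \<and> pm_le (\<Sum>i<Suc k. \<phi> i) d}"
  have "ideal_pow J (Suc k) \<subseteq> {p :: ('v, 'a) mpoly. keys p \<subseteq> U}"
    unfolding ideal_pow.simps ideal_prod_def
  proof (rule ideal_gen_minimal)
    show "is_ideal {p :: ('v, 'a) mpoly. keys p \<subseteq> U}"
      by (rule is_ideal_keys_subset) (auto simp: U_def intro: pm_le_add_right)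
    show "{a * b |a b. a \<in> ideal_pow J k \<and> b \<in> J} \<subseteq> {p. keys p \<subseteq> U}"
    proof clarify
      fix a b x assume ab: "a \<in> ideal_pow J k" "b \<in> J" and "x \<in> keys (a * b)"
      then obtain y z where x: "x = y + z" and "y \<in> keys a" "z \<in> keys b"
        using keys_mult[of a b] by blast
      then obtain \<phi> where \<phi>: "\<forall>i<k. \<exists>g\<in>J. \<phi> i \<in> keys g" "pm_le (\<Sum>i<k. \<phi> i) y"
        using Suc.IH ab(1) by blast
      have "(\<Sum>i<Suc k. (\<phi>(k := z)) i) = (\<Sum>i<k. \<phi> i) + z"
        by simp
      then have "pm_le (\<Sum>i<Suc k. (\<phi>(k := z)) i) x"
        using \<phi>(2) by (simp add: x pm_le_def lookup_add)
      moreover have "\<forall>i<Suc k. \<exists>g\<in>J. (\<phi>(k := z)) i \<in> keys g"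
        using \<phi>(1) ab(2) \<open>z \<in> keys b\<close> by (auto simp: less_Suc_eq)
      ultimately show "x \<in> U"
        unfolding U_def by blast
    qed
  qed
  with Suc.prems show ?case
    unfolding U_def by blast
qed

lemma pigeonhole_fiber:
  assumes "finite A" and "f ` A \<subseteq> B" and "finite B" and "card B * n < card A"
  shows "\<exists>x\<in>A. n < card {y \<in> A. f y = f x}"
proof (rule ccontr)
  assume no_large_fiber: "\<not> ?thesis"
  have small: "card {y \<in> A. f y = b} \<le> n" for b
  proof (cases "\<exists>x\<in>A. f x = b")
    case False
    then have "{y \<in> A. f y = b} = {}"
      by blast
    then show ?thesis
      by (metis card.empty zero_le)
  qed (use no_large_fiber in auto)
  have "card A = (\<Sum>b\<in>B. card {y \<in> A. f y = b})"
    using sum.group[OF assms(1,3,2), of "\<lambda>_. 1 :: nat"] by simp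
  also have "\<dots> \<le> card B * n"
    using sum_mono[of B _ "\<lambda>_. n", OF small] by simp
  finally show False
    using assms(4) by simp
qed

lemma card_keys_le_lookup_sum:
  fixes \<phi> :: "'i \<Rightarrow> ('v \<Rightarrow>\<^sub>0 nat)"
  assumes "finite A"
  shows "card {i \<in> A. v \<in> keys (\<phi> i)} \<le> lookup (\<Sum>i\<in>A. \<phi> i) v"
proof -
  have "card {i \<in> A. v \<in> keys (\<phi> i)} = (\<Sum>i\<in>{i \<in> A. v \<in> keys (\<phi> i)}. 1)"
    by simp
  also have "\<dots> \<le> (\<Sum>i\<in>{i \<in> A. v \<in> keys (\<phi> i)}. lookup (\<phi> i) v)"
    by (rule sum_mono) (simp add: in_keys_iff Suc_le_eq)
  also have "\<dots> \<le> (\<Sum>i\<in>A. lookup (\<phi> i) v)"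
    by (rule sum_mono2) (use assms in auto)
  finally show ?thesis
    by (simp add: lookup_sum)
qed

lemma ex_support_with_large_exponents:
  fixes \<phi> :: "nat \<Rightarrow> ('v::finite \<Rightarrow>\<^sub>0 nat)"
  assumes "pm_le (\<Sum>i<K. \<phi> i) d" and "card (UNIV :: 'v set set) * N < K"
  shows "\<exists>i<K. \<forall>v\<in>keys (\<phi> i). N < lookup d v"
proof -
  obtain i where "i < K" and many: "N < card {j \<in> {..<K}. keys (\<phi> j) = keys (\<phi> i)}"
    using pigeonhole_fiber[of "{..<K}" "\<lambda>j. keys (\<phi> j)" UNIV N] assms(2) by auto
  have "N < lookup d v" if "v \<in> keys (\<phi> i)" for v
  proof -
    have "card {j \<in> {..<K}. keys (\<phi> j) = keys (\<phi> i)} \<le> card {j \<in> {..<K}. v \<in> keys (\<phi> j)}"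
      using that by (intro card_mono) auto
    also have "\<dots> \<le> lookup (\<Sum>j<K. \<phi> j) v"
      by (rule card_keys_le_lookup_sum) simp
    also have "\<dots> \<le> lookup d v"
      using assms(1) by (simp add: pm_le_def)
    finally show ?thesis
      using many by simp
  qed
  with \<open>i < K\<close> show ?thesis
    by blast
qed

lemma monomial_mult_ideal_pow_mem:
  fixes h :: "('v::finite, 'a::comm_ring_1) mpoly"
  assumes bound: "\<And>g b. g \<in> J \<Longrightarrow> b \<in> keys g \<Longrightarrow>
      \<exists>\<mu>\<in>M. \<forall>v. lookup \<mu> v \<le> lookup c v + (if v \<in> keys b then N else 0)"
    and "card (UNIV :: 'v set set) * N < K" and "h \<in> ideal_pow J K"
  shows "monomial_poly c * h \<in> ideal_gen (monomial_poly ` M)"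
  unfolding mem_monomial_ideal_iff
proof
  fix x assume "x \<in> keys (monomial_poly c * h)"
  then obtain d where x: "x = c + d" and "d \<in> keys h"
    using keys_mult[of "monomial_poly c" h] by (auto simp: monomial_poly_def)
  then obtain \<phi> where \<phi>: "\<forall>i<K. \<exists>g\<in>J. \<phi> i \<in> keys g" "pm_le (\<Sum>i<K. \<phi> i) d"
    using keys_ideal_pow assms(3) by blast
  then obtain i where "i < K" and large: "\<forall>v\<in>keys (\<phi> i). N < lookup d v"
    using ex_support_with_large_exponents[of \<phi> K d N] assms(2) by auto
  then obtain \<mu> where "\<mu> \<in> M"
      and \<mu>: "\<forall>v. lookup \<mu> v \<le> lookup c v + (if v \<in> keys (\<phi> i) then N else 0)"
    using \<phi>(1) bound by blast
  have "lookup \<mu> v \<le> lookup x v" for v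
    using \<mu>[rule_format, of v] large by (cases "v \<in> keys (\<phi> i)") (auto simp: x lookup_add)
  then have "pm_le \<mu> x"
    unfolding pm_le_def ..
  with \<open>\<mu> \<in> M\<close> show "\<exists>\<mu>\<in>M. pm_le \<mu> x"
    by blast
qed

lemma monomial_of_key_mem_saturation:
  fixes f :: "('v::finite, 'a::idom) mpoly"
  assumes "f \<in> ideal_colon (ideal_gen (monomial_poly ` M)) (ideal_pow J k)" and "c \<in> keys f"
  shows "monomial_poly c \<in> ideal_saturation (ideal_gen (monomial_poly ` M)) J"
proof -
  define S where "S = {keys b |b g. g \<in> J \<and> b \<in> keys g}"
  have "\<exists>\<mu>\<in>M. \<forall>v. v \<notin> s \<longrightarrow> lookup \<mu> v \<le> lookup c v" if "s \<in> S" for s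
  proof -
    obtain g b where "g \<in> J" "b \<in> keys g" "s = keys b"
      using \<open>s \<in> S\<close> unfolding S_def by blast
    moreover have "f * g ^ k \<in> ideal_gen (monomial_poly ` M)"
      using assms(1) power_mem_ideal_pow[OF \<open>g \<in> J\<close>] by (auto simp: ideal_colon_def)
    ultimately show ?thesis
      using ex_generator_le_outside_keys assms(2) by blast
  qed
  then obtain \<mu> where \<mu>: "\<And>s. s \<in> S \<Longrightarrow> \<mu> s \<in> M \<and> (\<forall>v. v \<notin> s \<longrightarrow> lookup (\<mu> s) v \<le> lookup c v)"
    by metis
  define N where "N = (\<Sum>s\<in>UNIV. \<Sum>v\<in>UNIV. lookup (\<mu> s) v)"
  have \<mu>_le_N: "lookup (\<mu> s) v \<le> N" for s v
  proof -
    have "lookup (\<mu> s) v \<le> (\<Sum>v\<in>UNIV. lookup (\<mu> s) v)"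
      by (rule member_le_sum) auto
    also have "\<dots> \<le> N"
      unfolding N_def by (rule member_le_sum[where f = "\<lambda>s. \<Sum>v\<in>UNIV. lookup (\<mu> s) v"]) auto
    finally show ?thesis .
  qed
  have "\<exists>\<mu>\<in>M. \<forall>v. lookup \<mu> v \<le> lookup c v + (if v \<in> keys b then N else 0)"
    if "g \<in> J" "b \<in> keys g" for g b
  proof -
    have "keys b \<in> S"
      using that unfolding S_def by blast
    then have "lookup (\<mu> (keys b)) v \<le> lookup c v + (if v \<in> keys b then N else 0)" for v
      using \<mu> \<mu>_le_N[of "keys b" v] by (cases "v \<in> keys b") auto
    with \<mu>[OF \<open>keys b \<in> S\<close>] show ?thesis
      by blast
  qed
  then have "monomial_poly c * h \<in> ideal_gen (monomial_poly ` M)"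
    if "h \<in> ideal_pow J (card (UNIV :: 'v set set) * N + 1)" for h
    by (rule monomial_mult_ideal_pow_mem[where K = "card (UNIV :: 'v set set) * N + 1"])
      (use that in auto)
  then show ?thesis
    unfolding ideal_saturation_def ideal_colon_def by blast
qed

theorem lemma6p1:
  fixes I J :: "('v::finite, 'a::field) mpoly set"
  assumes "monomial_ideal I"
    and "is_ideal J"
  shows "monomial_ideal (ideal_saturation I J)"
proof -
  obtain M where I: "I = ideal_gen (monomial_poly ` M)"
    using assms(1) unfolding monomial_ideal_def by blast
  show ?thesis
  proof (rule monomial_idealI)
    show "is_ideal (ideal_saturation I J)"
      unfolding I by (intro is_ideal_ideal_saturation is_ideal_ideal_gen)
    fix f c assume "f \<in> ideal_saturation I J" and "c \<in> keys f"
    then obtain k where "f \<in> ideal_colon I (ideal_pow J k)"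
      unfolding ideal_saturation_def by blast
    from this \<open>c \<in> keys f\<close> show "monomial_poly c \<in> ideal_saturation I J"
      unfolding I by (rule monomial_of_key_mem_saturation)
  qed
qed

end
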